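(* Let $p$ be a prime, let $c\in[0,1]$ and let $\Theta(t)\in\mathbb{F}_p(\!(t^{-1})\!)$ be a Laurent series that exhibits $c$-escape of mass with respect to the sequence $\{t^k\}_{k\ge0}$. Then, for any irreducible polynomial $P(t)\in\mathbb{F}_p[t]$, the Laurent series $\Theta(P(t))\in\mathbb{F}_p(\!(t^{-1})\!)$ exhibits $c$-escape of mass with respect to the sequence $\{P(t)^k\}_{k\ge0}$.
   Context: For $\Theta(t)=\sum_{i=-h}^\infty a_i t^{-i}\in\mathbb{F}_p(\!(t^{-1})\!)$ and a polynomial $P(t)$, $\Theta(P(t)):=\sum_{i=-h}^\infty a_iP(t)^{-i}\in\mathbb{F}_p(\!(t^{-1})\!)$. Escape of mass (defined for quadratic irrationals): for a quadratic irrational $\Theta\in\mathbb{F}_q(\!(t^{-1})\!)$ and an irreducible $P\in\mathbb{F}_q[t]$, each $\Theta\cdot P^k$ is a quadratic irrational whose continued fraction expansion (polynomial partial quotients, of degree $\ge1$ after the zeroth) is eventually periodic; let $\ell_{\Theta P^k}$ be the period length and $A_1^{[\Theta P^k]},\dots,A_{\ell_{\Theta P^k}}^{[\Theta P^k]}$ the partial quotients of one period. Set $R_{k,n}=\frac{\sum_{i=1}^{\ell_{\Theta P^k}}\max\{\deg A_i^{[\Theta P^k]}-n,0\}}{\sum_{i=1}^{\ell_{\Theta P^k}}\deg A_i^{[\Theta P^k]}}$. $\Theta$ exhibits $c$ escape of mass with respect to $\{P^k\}_{k\ge0}$ if $\lim_{n\to\infty}\liminf_{k\to\infty}R_{k,n}\ge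 c$. *)

theory Defs
  imports "HOL-Computational_Algebra.Computational_Algebra"
          "HOL-Library.Extended_Real"
          "Berlekamp_Zassenhaus.Finite_Field"
begin

text \<open>We model F_q((t^{-1})) as formal Laurent series 'a fls in the variable
  X = t^{-1}.  A polynomial in t is embedded by sending t to fls_X_inv.\<close>

definition poly_to_fls :: "'a::field poly \<Rightarrow> 'a fls" where
  "poly_to_fls P = poly (map_poly fls_const P) fls_X_inv"

definition fls_polypart :: "'a::field fls \<Rightarrow> 'a poly" where
  "fls_polypart \<Theta> = Poly (map (\<lambda>j. fls_nth \<Theta> (- int j)) [0..<nat (- fls_subdegree \<Theta>) + 1])"

fun cf_rem :: "'a::field fls \<Rightarrow> nat \<Rightarrow> 'a fls" where
  "cf_rem \<Theta> 0 = \<Theta>"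
| "cf_rem \<Theta> (Suc n) = inverse (cf_rem \<Theta> n - poly_to_fls (fls_polypart (cf_rem \<Theta> n)))"

definition cf_pq :: "'a::field fls \<Rightarrow> nat \<Rightarrow> 'a poly" where
  "cf_pq \<Theta> n = fls_polypart (cf_rem \<Theta> n)"

definition is_rational_fls :: "'a::field fls \<Rightarrow> bool" where
  "is_rational_fls \<Theta> \<longleftrightarrow> (\<exists>a b. b \<noteq> 0 \<and> \<Theta> = poly_to_fls a / poly_to_fls b)"

definition quadratic_irrational :: "'a::field fls \<Rightarrow> bool" where
  "quadratic_irrational \<Theta> \<longleftrightarrow> \<not> is_rational_fls \<Theta> \<and>
     (\<exists>a b c. (a, b, c) \<noteq> (0, 0, 0) \<and>
        poly_to_fls a * \<Theta>^2 + poly_to_fls b * \<Theta> + poly_to_fls c = 0)"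

definition cf_period :: "'a::field fls \<Rightarrow> nat" where
  "cf_period \<Theta> = (LEAST l. l > 0 \<and> (\<exists>N. \<forall>n\<ge>N. cf_pq \<Theta> (n + l) = cf_pq \<Theta> n))"

definition cf_preperiod :: "'a::field fls \<Rightarrow> nat" where
  "cf_preperiod \<Theta> = (LEAST N. \<forall>n\<ge>N. cf_pq \<Theta> (n + cf_period \<Theta>) = cf_pq \<Theta> n)"

definition period_pq :: "'a::field fls \<Rightarrow> nat \<Rightarrow> 'a poly" where
  "period_pq \<Theta> i = cf_pq \<Theta> (cf_preperiod \<Theta> + i - 1)"

definition escape_ratio :: "'a::field fls \<Rightarrow> 'a poly \<Rightarrow> nat \<Rightarrow> nat \<Rightarrow> real" where
  "escape_ratio \<Theta> P k n =
     (let \<Psi> = \<Theta> * poly_to_fls (P ^ k); l = cf_period \<Psi> in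
      real (\<Sum>i=1..l. max (degree (period_pq \<Psi> i) - n) 0)
      / real (\<Sum>i=1..l. degree (period_pq \<Psi> i)))"

definition exhibits_escape_of_mass :: "real \<Rightarrow> 'a::field fls \<Rightarrow> 'a poly \<Rightarrow> bool" where
  "exhibits_escape_of_mass c \<Theta> P \<longleftrightarrow> quadratic_irrational \<Theta> \<and>
     (\<exists>L. (\<lambda>n. liminf (\<lambda>k. ereal (escape_ratio \<Theta> P k n))) \<longlonglongrightarrow> L \<and> ereal c \<le> L)"

text \<open>Substitution Theta(P(t)) = sum a_i P(t)^{-i}.  Writing Theta = X^d F(X) with F a power
  series, Theta(P) = u^d F(u) where u = P(t)^{-1} = 1/P in the variable X = t^{-1}.\<close>
definition fls_subst_poly :: "'a::field fls \<Rightarrow> 'a poly \<Rightarrow> 'a fls" where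
  "fls_subst_poly \<Theta> P =
     (let u = inverse (poly_to_fls P) in
      u powi fls_subdegree \<Theta> *
      fps_to_fls (fps_compose (fls_base_factor_to_fps \<Theta>) (fls_regpart u)))"

end

theory Submission
  imports Defs
begin

(* Substituting P(t) for t is an injective ring endomorphism of F((t^-1)) for any nonconstant P.
  It sends a polynomial A(t) to A(P(t)) and series of absolute value < 1 to series of absolute
  value < 1, so it commutes with taking polynomial parts and hence with the continued fraction
  algorithm: the partial quotients of Theta(P) * P^k = (Theta * t^k)(P) are the A_i(P), with the
  same period and all degrees multiplied by deg P >= 1.  Such a scaling can only increase each
  escape ratio R_{k,n}.  Quadratic irrationality survives because the quadratic equation is
  transported by the homomorphism and a series is rational iff its expansion terminates. *)

unbundle fps_syntax

lemma poly_to_fls_0 [simp]: "poly_to_fls 0 = 0"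
  by (simp add: poly_to_fls_def)

lemma poly_to_fls_1 [simp]: "poly_to_fls 1 = 1"
  by (simp add: poly_to_fls_def)

lemma poly_to_fls_pCons: "poly_to_fls (pCons a p) = fls_const a + fls_X_inv * poly_to_fls p"
  by (cases "a = 0 \<and> p = 0") (auto simp: poly_to_fls_def map_poly_pCons)

lemma poly_to_fls_const [simp]: "poly_to_fls [:c:] = fls_const c"
  by (simp add: poly_to_fls_pCons)

lemma poly_to_fls_X [simp]: "poly_to_fls [:0, 1:] = fls_X_inv"
  by (simp add: poly_to_fls_pCons)

lemma poly_to_fls_nth:
  "poly_to_fls p $$ n = (if n \<le> 0 then Polynomial.coeff p (nat (- n)) else 0)"
proof (induction p arbitrary: n)
  case (pCons a p)
  show ?case
  proof (cases "n < 0")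
    case True
    then have "nat (- n) = Suc (nat (- (n + 1)))" by simp
    with True show ?thesis by (simp add: poly_to_fls_pCons fls_X_inv_times_conv_shift pCons.IH)
  qed (simp add: poly_to_fls_pCons fls_X_inv_times_conv_shift pCons.IH)
qed simp

lemma poly_to_fls_add [simp]: "poly_to_fls (p + q) = poly_to_fls p + poly_to_fls q"
  by (rule fls_eqI) (simp add: poly_to_fls_nth)

lemma poly_to_fls_diff [simp]: "poly_to_fls (p - q) = poly_to_fls p - poly_to_fls q"
  by (rule fls_eqI) (simp add: poly_to_fls_nth)

lemma poly_to_fls_smult: "poly_to_fls (Polynomial.smult c p) = fls_const c * poly_to_fls p"
  by (induction p) (simp_all add: poly_to_fls_pCons distrib_left mult.left_commute)

lemma poly_to_fls_mult [simp]: "poly_to_fls (p * q) = poly_to_fls p * poly_to_fls q"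
  by (induction p) (simp_all add: poly_to_fls_pCons poly_to_fls_smult distrib_right mult.assoc)

lemma poly_to_fls_power [simp]: "poly_to_fls (p ^ n) = poly_to_fls p ^ n"
  by (induction n) auto

lemma poly_to_fls_eq_0_iff [simp]: "poly_to_fls p = 0 \<longleftrightarrow> p = 0"
proof
  assume "poly_to_fls p = 0"
  then have "Polynomial.coeff p n = 0" for n
    using poly_to_fls_nth[of p "- int n"] by simp
  then show "p = 0" by (simp add: poly_eq_iff)
qed simp

lemma poly_to_fls_subdegree:
  assumes "p \<noteq> 0"
  shows "fls_subdegree (poly_to_fls p) = - int (degree p)"
proof (rule fls_subdegree_eqI)
  show "poly_to_fls p $$ (- int (degree p)) \<noteq> 0"
    using assms by (simp add: poly_to_fls_nth)
next
  fix n assume "n < - int (degree p)"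
  then show "poly_to_fls p $$ n = 0" by (simp add: poly_to_fls_nth coeff_eq_0)
qed

section \<open>Polynomial and fractional parts\<close>

text \<open>Fractional series are those of absolute value < 1, i.e. with polynomial part 0.\<close>

definition fls_fractional :: "'a::field fls \<Rightarrow> bool" where
  "fls_fractional f \<longleftrightarrow> (\<forall>n\<le>0. f $$ n = 0)"

lemma fls_fractional_0 [simp]: "fls_fractional 0"
  by (simp add: fls_fractional_def)

lemma fls_fractional_iff_subdegree: "fls_fractional f \<longleftrightarrow> f = 0 \<or> 0 < fls_subdegree f"
proof
  assume "fls_fractional f"
  then show "f = 0 \<or> 0 < fls_subdegree f"
    unfolding fls_fractional_def using nth_fls_subdegree_nonzero not_le by blast
qed (auto simp: fls_fractional_def)

lemma Poly_map_coeff_upt: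
  assumes "degree q < N"
  shows "Poly (map (Polynomial.coeff q) [0..<N]) = q"
  using assms by (intro poly_eqI) (auto simp: nth_default_def coeff_eq_0)

lemma fls_polypart_poly_add_fractional:
  assumes "fls_fractional f"
  shows "fls_polypart (poly_to_fls q + f) = q"
proof -
  define y where "y = poly_to_fls q + f"
  have y_nth: "y $$ (- int j) = Polynomial.coeff q j" for j
    using assms by (simp add: y_def poly_to_fls_nth fls_fractional_def)
  have "degree q < nat (- fls_subdegree y) + 1"
  proof (cases "q = 0")
    case False
    then have "fls_subdegree y \<le> - int (degree q)"
      by (intro fls_subdegree_leI) (simp add: y_nth)
    then show ?thesis by linarith
  qed simp
  then show ?thesis
    unfolding y_def[symmetric] fls_polypart_def y_nth by (rule Poly_map_coeff_upt)
qed

lemma fls_polypart_poly [simp]: "fls_polypart (poly_to_fls q) = q"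
  using fls_polypart_poly_add_fractional[of 0 q] by simp

lemma fls_fractional_sub_polypart: "fls_fractional (x - poly_to_fls (fls_polypart x))"
  unfolding fls_fractional_def
proof (intro allI impI)
  fix n :: int assume "n \<le> 0"
  then obtain j where n: "n = - int j" by (metis minus_minus neg_0_le_iff_le nonneg_int_cases)
  have "Polynomial.coeff (fls_polypart x) j = (if j < nat (- fls_subdegree x) + 1 then x $$ n else 0)"
    by (simp add: fls_polypart_def nth_default_def n del: upt_Suc)
  moreover have "x $$ n = 0" if "\<not> j < nat (- fls_subdegree x) + 1"
    using that n by (intro fls_eq0_below_subdegree) linarith
  ultimately show "(x - poly_to_fls (fls_polypart x)) $$ n = 0"
    by (auto simp: poly_to_fls_nth n)
qed

lemma fls_fractional_divide:
  assumes "b \<noteq> 0" and "degree r < degree b"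
  shows "fls_fractional (poly_to_fls r / poly_to_fls b)"
proof (cases "r = 0")
  case False
  then have "fls_subdegree (poly_to_fls r / poly_to_fls b) = int (degree b) - int (degree r)"
    using assms(1) by (simp add: divide_inverse poly_to_fls_subdegree)
  then show ?thesis using assms(2) by (simp add: fls_fractional_iff_subdegree)
qed simp

section \<open>Rational series have terminating expansions\<close>

lemma cf_rem_add: "cf_rem (cf_rem x m) n = cf_rem x (m + n)"
  by (induction n) simp_all

lemma is_rational_fls_0: "is_rational_fls 0"
  unfolding is_rational_fls_def by (rule exI[of _ 0], rule exI[of _ 1]) simp

lemma is_rational_fls_inverse:
  assumes "is_rational_fls x"
  shows "is_rational_fls (inverse x)"
proof -
  obtain a b where "b \<noteq> 0" and x: "x = poly_to_fls a / poly_to_fls b"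
    using assms by (auto simp: is_rational_fls_def)
  show ?thesis
  proof (cases "a = 0")
    case False
    then have "inverse x = poly_to_fls b / poly_to_fls a" by (simp add: x)
    with False show ?thesis unfolding is_rational_fls_def by blast
  qed (simp add: x is_rational_fls_0)
qed

lemma is_rational_fls_poly_add:
  assumes "is_rational_fls x"
  shows "is_rational_fls (poly_to_fls q + x)"
proof -
  obtain a b where b: "b \<noteq> 0" and x: "x = poly_to_fls a / poly_to_fls b"
    using assms by (auto simp: is_rational_fls_def)
  then have "poly_to_fls q + x = poly_to_fls (q * b + a) / poly_to_fls b"
    by (simp add: field_simps)
  with b show ?thesis unfolding is_rational_fls_def by blast
qed

lemma is_rational_fls_if_cf_rem_eq_0: "cf_rem x n = 0 \<Longrightarrow> is_rational_fls x"
proof (induction n arbitrary: x)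
  case 0
  then show ?case by (simp add: is_rational_fls_0)
next
  case (Suc n)
  then have "is_rational_fls (cf_rem x 1)"
    using cf_rem_add[of x 1 n] by simp
  moreover have "x = poly_to_fls (fls_polypart x) + inverse (cf_rem x 1)"
    by simp
  ultimately show ?case
    by (metis is_rational_fls_inverse is_rational_fls_poly_add)
qed

text \<open>The expansion of a/b runs the Euclidean algorithm on a and b.\<close>

lemma cf_rem_fraction_terminates:
  "b \<noteq> 0 \<Longrightarrow> \<exists>n. cf_rem (poly_to_fls a / poly_to_fls b) n = 0"
proof (induction "degree b" arbitrary: a b rule: less_induct)
  case less
  define r where "r = a mod b"
  have "poly_to_fls a = poly_to_fls (a div b) * poly_to_fls b + poly_to_fls r"
    by (metis div_mult_mod_eq poly_to_fls_add poly_to_fls_mult r_def)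
  then have y: "poly_to_fls a / poly_to_fls b = poly_to_fls (a div b) + poly_to_fls r / poly_to_fls b"
    using less.prems by (simp add: field_simps)
  show ?case
  proof (cases "r = 0")
    case True
    then have "cf_rem (poly_to_fls a / poly_to_fls b) 1 = 0"
      unfolding y by (simp add: fls_polypart_poly_add_fractional)
    then show ?thesis by blast
  next
    case False
    then have deg: "degree r < degree b"
      using degree_mod_less[of b a] less.prems by (simp add: r_def)
    then have "cf_rem (poly_to_fls a / poly_to_fls b) 1 = poly_to_fls b / poly_to_fls r"
      unfolding y using less.prems
      by (simp add: fls_polypart_poly_add_fractional fls_fractional_divide)
    moreover obtain n where "cf_rem (poly_to_fls b / poly_to_fls r) n = 0"
      using less.hyps[OF deg False] by blast
    ultimately show ?thesis by (metis cf_rem_add)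
  qed
qed

lemma cf_rem_terminates_if_rational: "is_rational_fls x \<Longrightarrow> \<exists>n. cf_rem x n = 0"
  unfolding is_rational_fls_def using cf_rem_fraction_terminates by blast

lemma excess_ratio_le_scaled:
  fixes e :: "'i \<Rightarrow> nat"
  assumes "d \<ge> 1"
  shows "real (\<Sum>i\<in>I. max (e i - n) 0) / real (\<Sum>i\<in>I. e i)
       \<le> real (\<Sum>i\<in>I. max (e i * d - n) 0) / real (\<Sum>i\<in>I. e i * d)"
proof -
  define A B A' where "A = (\<Sum>i\<in>I. e i - n)" and "B = (\<Sum>i\<in>I. e i)"
    and "A' = (\<Sum>i\<in>I. e i * d - n)"
  have "A * d \<le> A'"
    unfolding A_def A'_def sum_distrib_right
  proof (rule sum_mono)
    fix i
    have "n \<le> n * d" using assms by simp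
    then show "(e i - n) * d \<le> e i * d - n" by (metis diff_mult_distrib diff_le_mono2)
  qed
  then have "real A * real d / (real B * real d) \<le> real A' / (real B * real d)"
    by (intro divide_right_mono) (simp_all flip: of_nat_mult)
  then have "real A / real B \<le> real A' / real (B * d)"
    using assms by simp
  then show ?thesis by (simp add: A_def B_def A'_def sum_distrib_right)
qed

lemma escape_ratio_Suc_le: "escape_ratio \<Theta> P k (Suc n) \<le> escape_ratio \<Theta> P k n"
  unfolding escape_ratio_def Let_def
  by (intro divide_right_mono of_nat_mono sum_mono) (auto simp del: of_nat_sum)

lemma exhibits_escape_of_mass_if_escape_ratio_ge:
  assumes "exhibits_escape_of_mass c \<Theta> P"
    and "quadratic_irrational \<Psi>"
    and "\<And>k n. escape_ratio \<Theta> P k n \<le> escape_ratio \<Psi> Q k n"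
  shows "exhibits_escape_of_mass c \<Psi> Q"
proof -
  obtain L where L: "(\<lambda>n. liminf (\<lambda>k. ereal (escape_ratio \<Theta> P k n))) \<longlonglongrightarrow> L"
    and "ereal c \<le> L"
    using assms(1) unfolding exhibits_escape_of_mass_def by blast
  define g where "g n = liminf (\<lambda>k. ereal (escape_ratio \<Psi> Q k n))" for n
  have "decseq g"
    unfolding g_def
    by (intro decseq_SucI Liminf_mono always_eventually allI) (simp add: escape_ratio_Suc_le)
  then have g: "g \<longlonglongrightarrow> (INF n. g n)"
    by (rule LIMSEQ_INF)
  have "L \<le> (INF n. g n)"
  proof (rule LIMSEQ_le[OF L g])
    show "\<exists>N. \<forall>n\<ge>N. liminf (\<lambda>k. ereal (escape_ratio \<Theta> P k n)) \<le> g n"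
      unfolding g_def by (intro exI allI impI Liminf_mono always_eventually) (simp add: assms(3))
  qed
  with g \<open>ereal c \<le> L\<close> have "g \<longlonglongrightarrow> (INF n. g n) \<and> ereal c \<le> (INF n. g n)"
    by auto
  with assms(2) show ?thesis
    unfolding exhibits_escape_of_mass_def g_def by blast
qed

section \<open>Substituting a nonconstant polynomial\<close>

lemma fls_conv_shift_regpart:
  assumes "m \<le> fls_subdegree x \<or> x = 0"
  shows "x = fls_shift (- m) (fps_to_fls (fls_regpart (fls_shift m x)))"
  using assms by (auto simp: fls_shift_nonneg_subdegree)

locale nonconstant_poly_subst =
  fixes P :: "'a::field poly"
  assumes degree_P_pos: "degree P > 0"
begin

abbreviation subst :: "'a fls \<Rightarrow> 'a fls" where
  "subst x \<equiv> fls_subst_poly x P"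

definition P_inv :: "'a fls" where
  "P_inv = inverse (poly_to_fls P)"

definition P_inv_fps :: "'a fps" where
  "P_inv_fps = fls_regpart P_inv"

lemma P_nonzero: "P \<noteq> 0"
  using degree_P_pos by auto

lemma P_inv_nonzero: "P_inv \<noteq> 0"
  using P_nonzero by (simp add: P_inv_def)

lemma subdegree_P_inv: "fls_subdegree P_inv = int (degree P)"
  using P_nonzero by (simp add: P_inv_def poly_to_fls_subdegree)

lemma P_inv_fps_nth_0: "P_inv_fps $ 0 = 0"
  using subdegree_P_inv degree_P_pos by (simp add: P_inv_fps_def)

lemma fps_to_fls_P_inv_fps: "fps_to_fls P_inv_fps = P_inv"
  using subdegree_P_inv by (simp add: P_inv_fps_def)

lemma P_inv_fps_nonzero: "P_inv_fps \<noteq> 0"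
  using fps_to_fls_P_inv_fps P_inv_nonzero by auto

lemma subst_conv:
  "subst x = P_inv powi fls_subdegree x * fps_to_fls (fls_base_factor_to_fps x oo P_inv_fps)"
  by (simp add: fls_subst_poly_def P_inv_fps_def P_inv_def Let_def)

lemma subst_0 [simp]: "subst 0 = 0"
  by (simp add: subst_conv)

text \<open>The definition of fls_subst_poly uses the normalised representation X^d F(X) with
  F(0) \<noteq> 0 (where X = t^(-1)); the same formula holds for every representation X^m F(X).\<close>

lemma subst_shift_fps_to_fls:
  "subst (fls_shift (- m) (fps_to_fls F)) = P_inv powi m * fps_to_fls (F oo P_inv_fps)"
proof (cases "F = 0")
  case False
  define s where "s = subdegree F"
  define G where "G = fps_shift s F"
  define x where "x = fls_shift (- m) (fps_to_fls F)"
  have F: "F = G * fps_X ^ s"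
    unfolding G_def s_def by (rule subdegree_decompose)
  have subdegree_x: "fls_subdegree x = m + int s"
    using False by (simp add: x_def fls_subdegree_fls_to_fps s_def)
  have "fls_base_factor_to_fps x = G"
  proof (rule fps_ext)
    fix n
    have "fls_base_factor_to_fps x $ n = x $$ (m + int s + int n)"
      by (simp add: fls_base_factor_to_fps_nth subdegree_x ac_simps)
    also have "\<dots> = F $ (s + n)"
      by (simp add: x_def nat_add_distrib)
    finally show "fls_base_factor_to_fps x $ n = G $ n"
      by (simp add: G_def add.commute)
  qed
  then have "subst x = P_inv powi m * (P_inv ^ s * fps_to_fls (G oo P_inv_fps))"
    using P_inv_nonzero by (simp add: subst_conv subdegree_x power_int_add)
  also have "P_inv ^ s * fps_to_fls (G oo P_inv_fps) = fps_to_fls (F oo P_inv_fps)"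
    by (simp add: F fps_compose_mult_distrib[OF P_inv_fps_nth_0]
        fps_compose_power[OF P_inv_fps_nth_0, symmetric] fls_times_fps_to_fls
        fps_to_fls_power fps_to_fls_P_inv_fps P_inv_fps_nth_0 mult.commute)
  finally show ?thesis by (simp add: x_def)
qed simp

lemma subst_add: "subst (x + y) = subst x + subst y"
proof -
  define m where "m = min (fls_subdegree x) (fls_subdegree y)"
  define F G where "F = fls_regpart (fls_shift m x)" and "G = fls_regpart (fls_shift m y)"
  have x: "x = fls_shift (- m) (fps_to_fls F)" and y: "y = fls_shift (- m) (fps_to_fls G)"
    unfolding F_def G_def by (rule fls_conv_shift_regpart, simp add: m_def)+
  have "x + y = fls_shift (- m) (fps_to_fls (F + G))"
    by (simp add: x y)
  then have "subst (x + y) = P_inv powi m * fps_to_fls ((F + G) oo P_inv_fps)"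
    by (simp only: subst_shift_fps_to_fls)
  moreover have "subst x = P_inv powi m * fps_to_fls (F oo P_inv_fps)"
    and "subst y = P_inv powi m * fps_to_fls (G oo P_inv_fps)"
    by (subst x y, rule subst_shift_fps_to_fls)+
  ultimately show ?thesis
    by (simp add: fps_compose_add_distrib distrib_left)
qed

lemma subst_mult: "subst (x * y) = subst x * subst y"
proof -
  define m n where "m = fls_subdegree x" and "n = fls_subdegree y"
  define F G where "F = fls_regpart (fls_shift m x)" and "G = fls_regpart (fls_shift n y)"
  have x: "x = fls_shift (- m) (fps_to_fls F)" and y: "y = fls_shift (- n) (fps_to_fls G)"
    unfolding F_def G_def m_def n_def by (rule fls_conv_shift_regpart, simp)+
  have "x * y = fls_shift (- (m + n)) (fps_to_fls (F * G))"
    by (subst x, subst y) (simp add: fls_times_both_shifted_simp fls_times_fps_to_fls add.commute)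
  then have "subst (x * y) = P_inv powi (m + n) * fps_to_fls ((F * G) oo P_inv_fps)"
    by (simp only: subst_shift_fps_to_fls)
  moreover have "subst x = P_inv powi m * fps_to_fls (F oo P_inv_fps)"
    and "subst y = P_inv powi n * fps_to_fls (G oo P_inv_fps)"
    by (subst x y, rule subst_shift_fps_to_fls)+
  ultimately show ?thesis
    using P_inv_nonzero
    by (simp add: fps_compose_mult_distrib[OF P_inv_fps_nth_0] fls_times_fps_to_fls
        power_int_add mult_ac)
qed

lemma subst_1: "subst 1 = 1"
  using subst_shift_fps_to_fls[of 0 1] by simp

lemma subst_const: "subst (fls_const c) = fls_const c"
  using subst_shift_fps_to_fls[of 0 "fps_const c"] by simp

lemma subst_X_inv: "subst fls_X_inv = poly_to_fls P"
  using subst_shift_fps_to_fls[of "-1" 1]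
  by (simp add: fls_X_inv_conv_shift_1 power_int_minus P_inv_def)

lemma subst_diff: "subst (x - y) = subst x - subst y"
  using subst_add[of "x - y" y] by (simp add: algebra_simps)

lemma subst_power: "subst (x ^ n) = subst x ^ n"
  by (induction n) (simp_all add: subst_1 subst_mult)

lemma subst_eq_0_iff: "subst x = 0 \<longleftrightarrow> x = 0"
proof
  assume "subst x = 0"
  then have "fls_base_factor_to_fps x oo P_inv_fps = 0"
    using P_inv_nonzero by (simp add: subst_conv)
  then show "x = 0"
    using P_inv_fps_nonzero fls_base_factor_to_fps_nonzero
    by (auto simp: fps_compose_eq_0_iff[OF P_inv_fps_nth_0])
qed (simp add: subst_conv)

lemma subst_inverse: "subst (inverse x) = inverse (subst x)"
proof (cases "x = 0")
  case False
  then have "subst x * subst (inverse x) = 1"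
    by (simp add: subst_1 flip: subst_mult)
  then show ?thesis by (metis inverse_unique)
qed simp

lemma subst_poly_to_fls: "subst (poly_to_fls q) = poly_to_fls (q \<circ>\<^sub>p P)"
  by (induction q) (simp_all add: poly_to_fls_pCons pcompose_pCons subst_add subst_mult
      subst_const subst_X_inv)

text \<open>A fractional series is t^(-1) times a power series in t^(-1), and P_inv has
  valuation deg P > 0.\<close>

lemma subst_fractional:
  assumes "fls_fractional f"
  shows "fls_fractional (subst f)"
proof (cases "f = 0")
  case False
  then have "1 \<le> fls_subdegree f"
    using assms by (simp add: fls_fractional_iff_subdegree)
  then have "f = fls_shift (- 1) (fps_to_fls (fls_regpart (fls_shift 1 f)))"
    by (intro fls_conv_shift_regpart) simp
  then have "subst f = P_inv powi 1 * fps_to_fls (fls_regpart (fls_shift 1 f) oo P_inv_fps)"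
    by (metis subst_shift_fps_to_fls)
  then have "subst f = P_inv * fps_to_fls (fls_regpart (fls_shift 1 f) oo P_inv_fps)"
    by simp
  also have "fls_fractional \<dots>"
  proof (cases "P_inv * fps_to_fls (fls_regpart (fls_shift 1 f) oo P_inv_fps) = 0")
    case False
    then have "fls_subdegree P_inv + 0
        \<le> fls_subdegree (P_inv * fps_to_fls (fls_regpart (fls_shift 1 f) oo P_inv_fps))"
      by (intro order.trans[OF add_left_mono fls_mult_subdegree_ge] fls_subdegree_fls_to_fps_gt0)
    then show ?thesis
      using subdegree_P_inv degree_P_pos by (simp add: fls_fractional_iff_subdegree)
  qed (simp only: fls_fractional_0)
  finally show ?thesis .
qed simp

lemma fls_polypart_subst: "fls_polypart (subst x) = fls_polypart x \<circ>\<^sub>p P"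
proof -
  define f where "f = x - poly_to_fls (fls_polypart x)"
  have "subst x = poly_to_fls (fls_polypart x \<circ>\<^sub>p P) + subst f"
    by (simp add: f_def subst_diff subst_poly_to_fls)
  then show ?thesis
    unfolding f_def
    by (simp add: fls_polypart_poly_add_fractional subst_fractional fls_fractional_sub_polypart)
qed

lemma cf_rem_subst: "cf_rem (subst x) n = subst (cf_rem x n)"
  by (induction n) (simp_all add: fls_polypart_subst subst_inverse subst_diff subst_poly_to_fls)

lemma cf_pq_subst: "cf_pq (subst x) n = cf_pq x n \<circ>\<^sub>p P"
  by (simp add: cf_pq_def cf_rem_subst fls_polypart_subst)

lemma pcompose_P_eq_iff: "p \<circ>\<^sub>p P = q \<circ>\<^sub>p P \<longleftrightarrow> p = q"
  using pcompose_eq_0_iff[OF degree_P_pos, of "p - q"] by (auto simp: pcompose_diff)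

lemma cf_pq_subst_eq_iff: "cf_pq (subst x) a = cf_pq (subst x) b \<longleftrightarrow> cf_pq x a = cf_pq x b"
  by (simp add: cf_pq_subst pcompose_P_eq_iff)

lemma cf_period_subst: "cf_period (subst x) = cf_period x"
  by (simp add: cf_period_def cf_pq_subst_eq_iff)

lemma cf_preperiod_subst: "cf_preperiod (subst x) = cf_preperiod x"
  by (simp add: cf_preperiod_def cf_pq_subst_eq_iff cf_period_subst)

lemma period_pq_subst: "period_pq (subst x) i = period_pq x i \<circ>\<^sub>p P"
  by (simp add: period_pq_def cf_preperiod_subst cf_pq_subst)

lemma escape_ratio_le_subst: "escape_ratio \<Theta> [:0, 1:] k n \<le> escape_ratio (subst \<Theta>) P k n"
proof -
  define \<Psi> where "\<Psi> = \<Theta> * poly_to_fls ([:0, 1:] ^ k)"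
  have "subst \<Theta> * poly_to_fls (P ^ k) = subst \<Psi>"
    by (simp add: \<Psi>_def subst_mult subst_power subst_X_inv)
  then have "escape_ratio (subst \<Theta>) P k n =
      real (\<Sum>i=1..cf_period \<Psi>. max (degree (period_pq \<Psi> i) * degree P - n) 0)
      / real (\<Sum>i=1..cf_period \<Psi>. degree (period_pq \<Psi> i) * degree P)"
    by (simp add: escape_ratio_def Let_def cf_period_subst period_pq_subst)
  moreover have "escape_ratio \<Theta> [:0, 1:] k n =
      real (\<Sum>i=1..cf_period \<Psi>. max (degree (period_pq \<Psi> i) - n) 0)
      / real (\<Sum>i=1..cf_period \<Psi>. degree (period_pq \<Psi> i))"
    by (simp add: escape_ratio_def Let_def \<Psi>_def)
  ultimately show ?thesis
    using degree_P_pos by (simp only:) (rule excess_ratio_le_scaled, simp)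
qed

lemma is_rational_fls_if_subst:
  assumes "is_rational_fls (subst x)"
  shows "is_rational_fls x"
proof -
  obtain n where "cf_rem (subst x) n = 0"
    using assms cf_rem_terminates_if_rational by blast
  then have "cf_rem x n = 0"
    by (simp add: cf_rem_subst subst_eq_0_iff)
  then show ?thesis
    by (rule is_rational_fls_if_cf_rem_eq_0)
qed

lemma quadratic_irrational_subst:
  assumes "quadratic_irrational x"
  shows "quadratic_irrational (subst x)"
proof -
  obtain a b c where "(a, b, c) \<noteq> (0, 0, 0)"
    and eq: "poly_to_fls a * x ^ 2 + poly_to_fls b * x + poly_to_fls c = 0"
    using assms unfolding quadratic_irrational_def by blast
  then have "(a \<circ>\<^sub>p P, b \<circ>\<^sub>p P, c \<circ>\<^sub>p P) \<noteq> (0, 0, 0)"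
    using pcompose_eq_0_iff[OF degree_P_pos] by auto
  moreover have "poly_to_fls (a \<circ>\<^sub>p P) * subst x ^ 2 + poly_to_fls (b \<circ>\<^sub>p P) * subst x
      + poly_to_fls (c \<circ>\<^sub>p P) = 0"
    using arg_cong[OF eq, of subst]
    by (simp only: subst_add subst_mult subst_power subst_poly_to_fls subst_0)
  moreover have "\<not> is_rational_fls (subst x)"
    using assms is_rational_fls_if_subst unfolding quadratic_irrational_def by blast
  ultimately show ?thesis
    unfolding quadratic_irrational_def by blast
qed

end

theorem theorem1p19:
  fixes \<Theta> :: "'p::prime_card mod_ring fls"
    and c :: real
    and P :: "'p mod_ring poly"
  assumes "0 \<le> c" and "c \<le> 1"
    and "exhibits_escape_of_mass c \<Theta> [:0, 1:]"
    and "irreducible P"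
  shows "exhibits_escape_of_mass c (fls_subst_poly \<Theta> P) P"
proof -
  have "P \<noteq> 0" and "\<not> is_unit P"
    using assms(4) by (auto simp: irreducible_def)
  then have "degree P > 0"
    by (simp add: is_unit_iff_degree)
  then interpret nonconstant_poly_subst P
    by unfold_locales
  show ?thesis
    using assms(3)
  proof (rule exhibits_escape_of_mass_if_escape_ratio_ge)
    show "quadratic_irrational (subst \<Theta>)"
      using assms(3) by (simp add: exhibits_escape_of_mass_def quadratic_irrational_subst)
  qed (rule escape_ratio_le_subst)
qed

end
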